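(* For every $n\ge1$, the set $\mathcal Z_{n+}$ is open in $(X_d^{(c)})^n$.
   Context: Let $d\ge2$. $E_{d+1}=\mathbb R^{d+1}$, $E^{(c)}_{d+1}=\mathbb C^{d+1}$ with bilinear form $(x,y)=x^0y^0+x^dy^d-\sum_{j=1}^{d-1}x^jy^j$. $X_d=\{x\in E_{d+1}:(x,x)=1\}$, $X_d^{(c)}=\{z\in E^{(c)}_{d+1}:(z,z)=1\}$. $\exp$ is the matrix exponential; $\ell(a\wedge b)x=a(b,x)-b(a,x)$. $\mathcal C_1=\{\ell(a\wedge b):(a,a)=(b,b)=1,(a,b)=0,a^0b^d-a^db^0>0\}$. $\mathcal Z_{n+}$ is the set of $(z_1,\dots,z_n)\in(X_d^{(c)})^n$ such that $z_j=e^{\tau_1M_1}\cdots e^{\tau_jM_j}c_j$ for $j=1,\dots,n$, with $\mathrm{Im}\,\tau_j>0$, $M_j\in\mathcal C_1$, $c_j\in X_d$. *)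

theory Defs
  imports "HOL-Analysis.Analysis"
begin

text \<open>Vectors of E_{d+1} (resp. its complexification) are modelled as functions
  nat => real (resp. nat => complex) vanishing at indices > d; coordinates 0..d.
  Tuples (z_1,...,z_n) are functions nat => (nat => complex) vanishing outside {1..n}.
  The topology is the product topology on functions (which on these finitely
  supported subsets is the Euclidean topology).\<close>

definition bform :: "nat \<Rightarrow> (nat \<Rightarrow> 'a::comm_ring) \<Rightarrow> (nat \<Rightarrow> 'a) \<Rightarrow> 'a" where
  "bform d x y = x 0 * y 0 + x d * y d - (\<Sum>j\<in>{1..d-1}. x j * y j)"

definition Evec :: "nat \<Rightarrow> (nat \<Rightarrow> 'a::zero) set" where
  "Evec d = {x. \<forall>i>d. x i = 0}"

definition Xd :: "nat \<Rightarrow> (nat \<Rightarrow> real) set" where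
  "Xd d = {x \<in> Evec d. bform d x x = 1}"

definition Xdc :: "nat \<Rightarrow> (nat \<Rightarrow> complex) set" where
  "Xdc d = {z \<in> Evec d. bform d z z = 1}"

definition Xdc_pow :: "nat \<Rightarrow> nat \<Rightarrow> (nat \<Rightarrow> nat \<Rightarrow> complex) set" where
  "Xdc_pow d n = {z. (\<forall>j\<in>{1..n}. z j \<in> Xdc d) \<and> (\<forall>j. j \<notin> {1..n} \<longrightarrow> z j = (\<lambda>_. 0))}"

definition cvec :: "(nat \<Rightarrow> real) \<Rightarrow> (nat \<Rightarrow> complex)" where
  "cvec x = (\<lambda>i. complex_of_real (x i))"

definition ell :: "nat \<Rightarrow> (nat \<Rightarrow> real) \<Rightarrow> (nat \<Rightarrow> real) \<Rightarrow> (nat \<Rightarrow> complex) \<Rightarrow> (nat \<Rightarrow> complex)" where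
  "ell d a b x = (\<lambda>i. cvec a i * bform d (cvec b) x - cvec b i * bform d (cvec a) x)"

definition C1 :: "nat \<Rightarrow> ((nat \<Rightarrow> complex) \<Rightarrow> (nat \<Rightarrow> complex)) set" where
  "C1 d = {ell d a b | a b. a \<in> Evec d \<and> b \<in> Evec d \<and> bform d a a = 1 \<and> bform d b b = 1
            \<and> bform d a b = 0 \<and> a 0 * b d - a d * b 0 > 0}"

definition expop :: "((nat \<Rightarrow> complex) \<Rightarrow> (nat \<Rightarrow> complex)) \<Rightarrow> (nat \<Rightarrow> complex) \<Rightarrow> (nat \<Rightarrow> complex)" where
  "expop L x = (\<lambda>i. \<Sum>k. (L ^^ k) x i / of_nat (fact k))"

text \<open>expchain tau M j x = e^{tau_1 M_1} ... e^{tau_j M_j} x\<close>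
fun expchain :: "(nat \<Rightarrow> complex) \<Rightarrow> (nat \<Rightarrow> (nat \<Rightarrow> complex) \<Rightarrow> (nat \<Rightarrow> complex))
                 \<Rightarrow> nat \<Rightarrow> (nat \<Rightarrow> complex) \<Rightarrow> (nat \<Rightarrow> complex)" where
  "expchain \<tau> M 0 x = x"
| "expchain \<tau> M (Suc j) x = expchain \<tau> M j (expop (\<lambda>y i. \<tau> (Suc j) * M (Suc j) y i) x)"

definition Zplus :: "nat \<Rightarrow> nat \<Rightarrow> (nat \<Rightarrow> nat \<Rightarrow> complex) set" where
  "Zplus d n = {z \<in> Xdc_pow d n. \<exists>\<tau> M c. \<forall>j\<in>{1..n}.
       Im (\<tau> j) > 0 \<and> M j \<in> C1 d \<and> c j \<in> Xd d \<and> z j = expchain \<tau> M j (cvec (c j))}"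

end

theory Submission
  imports Defs
begin

text \<open>Write \<open>z\<^sub>1 = exp (\<tau> L) c\<close> with \<open>L = \<ell>(a \<and> b)\<close> and \<open>\<tau> = s + i t\<close>, \<open>t > 0\<close>. On the plane
  of \<open>a\<close>, \<open>b\<close> the exponential is a rotation by the complex angle \<open>\<tau>\<close>, so \<open>Im z\<^sub>1 = sinh t \<cdot> u\<close>
  with \<open>(u, u) = (a, c)\<^sup>2 + (b, c)\<^sup>2\<close>, which the orientation condition makes positive. For \<open>w\<close>
  on the complex quadric near \<open>z\<^sub>1\<close> choose \<open>t'\<close> with \<open>sinh\<^sup>2 t' \<cdot> (u, u) = (Im w, Im w)\<close>: then
  the real and imaginary parts of \<open>\<zeta> = exp ((s + i t') L) c\<close> and of \<open>w\<close> are orthogonal pairs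
  with equal squares, and a product of four reflections close to the identity carries the one
  pair to the other. Conjugating by it writes \<open>w = exp ((s + i t') L') c'\<close> with
  \<open>L' = \<ell>(a' \<and> b')\<close> and \<open>a', b', c'\<close> close to \<open>a, b, c\<close>. Undoing the first exponential on the
  remaining points reduces \<open>n + 1\<close> points to \<open>n\<close>.\<close>

section \<open>The bilinear form\<close>

lemma bform_add_left: "bform d (\<lambda>i. u i + v i) w = bform d u w + bform d v w"
  by (simp add: bform_def algebra_simps sum.distrib)

lemma bform_add_right: "bform d w (\<lambda>i. u i + v i) = bform d w u + bform d w v"
  by (simp add: bform_def algebra_simps sum.distrib)

lemma bform_diff_left: "bform d (\<lambda>i. u i - v i) w = bform d u w - bform d v w"
  by (simp add: bform_def algebra_simps sum_subtractf)

lemma bform_diff_right: "bform d w (\<lambda>i. u i - v i) = bform d w u - bform d w v"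
  by (simp add: bform_def algebra_simps sum_subtractf)

lemma bform_minus_right: "bform d w (\<lambda>i. - u i) = - bform d w u"
  by (simp add: bform_def sum_negf algebra_simps)

lemma bform_scale_left: "bform d (\<lambda>i. c * u i) w = c * bform d u w"
  by (simp add: bform_def algebra_simps sum_distrib_left)

lemma bform_scale_right: "bform d w (\<lambda>i. c * u i) = c * bform d w u"
  by (simp add: bform_def algebra_simps sum_distrib_left)

lemma bform_scale'_left: "bform d (\<lambda>i. u i * c) w = c * bform d u w"
  by (simp add: bform_def algebra_simps sum_distrib_left)

lemma bform_scale'_right: "bform d w (\<lambda>i. u i * c) = c * bform d w u"
  by (simp add: bform_def algebra_simps sum_distrib_left)

lemma bform_zero_left: "bform d (\<lambda>i. 0) w = 0"
  by (simp add: bform_def)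

lemma bform_zero_right: "bform d w (\<lambda>i. 0) = 0"
  by (simp add: bform_def)

lemmas bform_linear = bform_add_left bform_add_right bform_diff_left bform_diff_right
  bform_scale_left bform_scale_right
  bform_scale'_left bform_scale'_right bform_zero_left bform_zero_right

lemma bform_commute: "bform d u v = bform d v u"
  by (simp add: bform_def algebra_simps)

lemma bform_cvec: "bform d (cvec u) (cvec v) = complex_of_real (bform d u v)"
  by (simp add: bform_def cvec_def)

lemma cvec_Evec: "v \<in> Evec d \<Longrightarrow> cvec v \<in> Evec d"
  by (simp add: Evec_def cvec_def)

section \<open>The exponential of \<open>\<tau> \<ell>(a \<and> b)\<close>\<close>

definition oriented_orthonormal :: "nat \<Rightarrow> (nat \<Rightarrow> real) \<Rightarrow> (nat \<Rightarrow> real) \<Rightarrow> bool" where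
  "oriented_orthonormal d a b \<longleftrightarrow> a \<in> Evec d \<and> b \<in> Evec d \<and> bform d a a = 1 \<and> bform d b b = 1
     \<and> bform d a b = 0 \<and> a 0 * b d - a d * b 0 > 0"

lemma C1_eq: "C1 d = {ell d a b | a b. oriented_orthonormal d a b}"
  by (simp add: C1_def oriented_orthonormal_def)

text \<open>For orthonormal \<open>A\<close>, \<open>B\<close> the operator \<open>L = \<ell>(A \<and> B)\<close> satisfies \<open>L\<^sup>3 = -L\<close>, so
  \<open>exp (\<tau> L) = 1 + sin \<tau> L + (1 - cos \<tau>) L\<^sup>2\<close>, where \<open>-L\<^sup>2\<close> is the projection onto the plane of \<open>A\<close>, \<open>B\<close>.\<close>
definition plane_rotation :: "nat \<Rightarrow> complex \<Rightarrow> (nat \<Rightarrow> complex) \<Rightarrow> (nat \<Rightarrow> complex)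
    \<Rightarrow> (nat \<Rightarrow> complex) \<Rightarrow> (nat \<Rightarrow> complex)" where
  "plane_rotation d \<tau> A B x = (\<lambda>i. x i + sin \<tau> * (A i * bform d B x - B i * bform d A x)
      + (cos \<tau> - 1) * (A i * bform d A x + B i * bform d B x))"

lemma funpow_ell:
  assumes aa: "bform d a a = 1" and bb: "bform d b b = 1" and ab: "bform d a b = 0"
  shows "((\<lambda>y i. \<tau> * ell d a b y i) ^^ k) x = (\<lambda>i. (if k = 0 then x i else 0)
     + of_real (sin_coeff k * fact k) * \<tau>^k * (cvec a i * bform d (cvec b) x - cvec b i * bform d (cvec a) x)
     + of_real ((cos_coeff k - (if k = 0 then 1 else 0)) * fact k) * \<tau>^k
         * (cvec a i * bform d (cvec a) x + cvec b i * bform d (cvec b) x))"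
proof (induction k)
  case 0
  then show ?case by (simp add: sin_coeff_def cos_coeff_def)
next
  case (Suc k)
  have AA: "bform d (cvec a) (cvec a) = 1" and BB: "bform d (cvec b) (cvec b) = 1"
    and AB: "bform d (cvec a) (cvec b) = 0" and BA: "bform d (cvec b) (cvec a) = 0"
    using aa bb ab by (auto simp: bform_cvec bform_commute[of d b a])
  have ell: "ell d a b y = (\<lambda>i. cvec a i * bform d (cvec b) y - cvec b i * bform d (cvec a) y)" for y
    by (simp add: ell_def)
  show ?case
  proof (cases "k = 0")
    case True
    then show ?thesis by (simp add: ell sin_coeff_def cos_coeff_def algebra_simps)
  next
    case False
    have sin_Suc: "sin_coeff (Suc k) * fact (Suc k) = cos_coeff k * fact k"
      by (simp add: sin_coeff_Suc)
    have cos_Suc: "(cos_coeff (Suc k) - (if Suc k = 0 then 1 else 0)) * fact (Suc k)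
        = - sin_coeff k * fact k"
      by (simp add: cos_coeff_Suc)
    have "(\<lambda>i. (if k = 0 then x i else 0) + Z i) = Z" for Z :: "nat \<Rightarrow> complex"
      using False by simp
    note IH = Suc.IH[unfolded this]
    show ?thesis
      unfolding funpow.simps(2) comp_def IH
      by (simp only: sin_Suc cos_Suc ell) (simp add: bform_linear AA BB AB BA False, rule ext, simp add: algebra_simps)
  qed
qed

lemma sums_cos_minus_one:
  "(\<lambda>n. (cos_coeff n - (if n = 0 then 1 else 0)) *\<^sub>R (\<tau>::complex)^n) sums (cos \<tau> - 1)"
proof -
  have "(\<lambda>n. (cos_coeff n - (if n = 0 then 1 else 0)) *\<^sub>R \<tau>^n)
      = (\<lambda>n. cos_coeff n *\<^sub>R \<tau>^n - (if n = 0 then 1 else 0))"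
    by (rule ext) (simp add: cos_coeff_def algebra_simps)
  also have "\<dots> sums (cos \<tau> - 1)"
    by (intro sums_diff cos_converges) (simp add: sums_single[of 0 "\<lambda>_. 1::complex", simplified])
  finally show ?thesis .
qed

lemma expop_ell_eq_plane_rotation:
  assumes "bform d a a = 1" and "bform d b b = 1" and "bform d a b = 0"
  shows "expop (\<lambda>y i. \<tau> * ell d a b y i) = plane_rotation d \<tau> (cvec a) (cvec b)"
proof (intro ext)
  fix x i
  define P where "P = cvec a i * bform d (cvec b) x - cvec b i * bform d (cvec a) x"
  define Q where "Q = cvec a i * bform d (cvec a) x + cvec b i * bform d (cvec b) x"
  have series_term: "((\<lambda>y i. \<tau> * ell d a b y i) ^^ k) x i / of_nat (fact k) =
     (if k = 0 then x i else 0) + (sin_coeff k *\<^sub>R \<tau>^k) * P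
       + ((cos_coeff k - (if k = 0 then 1 else 0)) *\<^sub>R \<tau>^k) * Q" for k
    unfolding funpow_ell[OF assms] P_def Q_def by (simp add: scaleR_conv_of_real field_simps)
  have "(\<lambda>k. ((\<lambda>y i. \<tau> * ell d a b y i) ^^ k) x i / of_nat (fact k)) sums (x i + sin \<tau> * P + (cos \<tau> - 1) * Q)"
    unfolding series_term
    by (intro sums_add sums_mult2 sin_converges sums_cos_minus_one)
       (simp add: sums_single[of 0 "\<lambda>_. x i", simplified])
  then show "expop (\<lambda>y i. \<tau> * ell d a b y i) x i = plane_rotation d \<tau> (cvec a) (cvec b) x i"
    unfolding expop_def plane_rotation_def P_def Q_def by (simp add: sums_iff)
qed

lemma plane_rotation_isometry:
  assumes AA: "bform d A A = 1" and BB: "bform d B B = 1" and AB: "bform d A B = 0"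
  shows "bform d (plane_rotation d \<tau> A B x) (plane_rotation d \<tau> A B y) = bform d x y"
proof -
  have BA: "bform d B A = 0" using AB by (simp add: bform_commute)
  define S where "S = sin \<tau>"
  define C where "C = cos \<tau>"
  have sc: "S\<^sup>2 + C\<^sup>2 = 1" unfolding S_def C_def by simp
  show ?thesis
    unfolding plane_rotation_def S_def[symmetric] C_def[symmetric]
    by (simp add: bform_linear AA BB AB BA, simp only: bform_commute[of d x A] bform_commute[of d x B]
        bform_commute[of d y A] bform_commute[of d y B]) (use sc in algebra)
qed

lemma plane_rotation_inverse:
  assumes AA: "bform d A A = 1" and BB: "bform d B B = 1" and AB: "bform d A B = 0"
  shows "plane_rotation d (-\<tau>) A B (plane_rotation d \<tau> A B x) = x"
proof (rule ext)
  fix i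
  have BA: "bform d B A = 0" using AB by (simp add: bform_commute)
  have sc: "(sin \<tau>)\<^sup>2 + (cos \<tau>)\<^sup>2 = 1" by simp
  show "plane_rotation d (-\<tau>) A B (plane_rotation d \<tau> A B x) i = x i"
    unfolding plane_rotation_def by (simp add: bform_linear AA BB AB BA) (use sc in algebra)
qed

lemma plane_rotation_Xdc:
  assumes "A \<in> Evec d" and "B \<in> Evec d"
    and "bform d A A = 1" and "bform d B B = 1" and "bform d A B = 0" and "z \<in> Xdc d"
  shows "plane_rotation d \<tau> A B z \<in> Xdc d"
  using assms plane_rotation_isometry[OF assms(3-5)]
  by (simp add: Xdc_def Evec_def plane_rotation_def)

lemma plane_rotation_cvec:
  "plane_rotation d \<tau> (cvec a) (cvec b) (cvec c) = (\<lambda>i. cvec c i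
     + sin \<tau> * of_real (a i * bform d b c - b i * bform d a c)
     + (cos \<tau> - 1) * of_real (a i * bform d a c + b i * bform d b c))"
  unfolding plane_rotation_def bform_cvec by (simp add: cvec_def)

lemma oriented_orthonormal_cvec:
  assumes "oriented_orthonormal d a b"
  shows "cvec a \<in> Evec d" and "cvec b \<in> Evec d" and "bform d (cvec a) (cvec a) = 1"
    and "bform d (cvec b) (cvec b) = 1" and "bform d (cvec a) (cvec b) = 0"
  using assms by (simp_all add: oriented_orthonormal_def cvec_Evec bform_cvec)

lemma plane_rotation_cvec_Xdc:
  "oriented_orthonormal d a b \<Longrightarrow> c \<in> Xd d \<Longrightarrow> plane_rotation d \<tau> (cvec a) (cvec b) (cvec c) \<in> Xdc d"
  by (intro plane_rotation_Xdc oriented_orthonormal_cvec)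
     (auto simp: Xd_def Xdc_def cvec_Evec bform_cvec)

definition Re_vec :: "(nat \<Rightarrow> complex) \<Rightarrow> nat \<Rightarrow> real" where
  "Re_vec z = (\<lambda>i. Re (z i))"

definition Im_vec :: "(nat \<Rightarrow> complex) \<Rightarrow> nat \<Rightarrow> real" where
  "Im_vec z = (\<lambda>i. Im (z i))"

lemma Re_Im_vec_decomp: "z = (\<lambda>i. cvec (Re_vec z) i + \<i> * cvec (Im_vec z) i)"
  by (rule ext) (simp add: cvec_def Re_vec_def Im_vec_def complex_eq_iff)

lemma bform_Re_Im_vec:
  "bform d z z = of_real (bform d (Re_vec z) (Re_vec z) - bform d (Im_vec z) (Im_vec z))
     + \<i> * of_real (2 * bform d (Re_vec z) (Im_vec z))"
proof -
  have "bform d z z = bform d (\<lambda>i. cvec (Re_vec z) i + \<i> * cvec (Im_vec z) i)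
      (\<lambda>i. cvec (Re_vec z) i + \<i> * cvec (Im_vec z) i)"
    by (subst (1 2) Re_Im_vec_decomp[of z]) (rule refl)
  also have "\<dots> = of_real (bform d (Re_vec z) (Re_vec z) - bform d (Im_vec z) (Im_vec z))
      + \<i> * of_real (2 * bform d (Re_vec z) (Im_vec z))"
    by (simp add: bform_linear bform_cvec bform_commute[of d "Im_vec z" "Re_vec z"] algebra_simps)
  finally show ?thesis .
qed

lemma Xdc_Re_Im_vec:
  assumes "z \<in> Xdc d"
  shows "bform d (Re_vec z) (Re_vec z) = 1 + bform d (Im_vec z) (Im_vec z)"
    and "bform d (Re_vec z) (Im_vec z) = 0"
    and "Re_vec z \<in> Evec d" and "Im_vec z \<in> Evec d"
proof -
  have "bform d z z = 1" and "z \<in> Evec d"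
    using assms by (auto simp: Xdc_def)
  then show "bform d (Re_vec z) (Re_vec z) = 1 + bform d (Im_vec z) (Im_vec z)"
    and "bform d (Re_vec z) (Im_vec z) = 0"
    and "Re_vec z \<in> Evec d" and "Im_vec z \<in> Evec d"
    unfolding bform_Re_Im_vec[of d z] by (auto simp: complex_eq_iff Evec_def Re_vec_def Im_vec_def)
qed

section \<open>Reflections and frame maps\<close>

definition reflection :: "nat \<Rightarrow> (nat \<Rightarrow> 'a::field) \<Rightarrow> (nat \<Rightarrow> 'a) \<Rightarrow> (nat \<Rightarrow> 'a)" where
  "reflection d v x = (\<lambda>i. x i - 2 * bform d v x / bform d v v * v i)"

lemma reflection_isometry:
  assumes "bform d v v \<noteq> 0"
  shows "bform d (reflection d v x) (reflection d v y) = bform d x y"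
  unfolding reflection_def using assms
  by (simp only: bform_linear) (simp add: bform_commute[of d x v] bform_commute[of d y v] field_simps)

lemma reflection_add: "reflection d v (\<lambda>i. x i + y i) = (\<lambda>i. reflection d v x i + reflection d v y i)"
  unfolding reflection_def by (rule ext) (simp add: bform_linear field_simps add_divide_distrib)

lemma reflection_scale: "reflection d v (\<lambda>i. c * x i) = (\<lambda>i. c * reflection d v x i)"
  unfolding reflection_def by (rule ext) (simp add: bform_linear field_simps)

lemma reflection_Evec: "v \<in> Evec d \<Longrightarrow> x \<in> Evec d \<Longrightarrow> reflection d v x \<in> Evec d"
  by (simp add: Evec_def reflection_def)

lemma reflection_orthogonal: "bform d v x = 0 \<Longrightarrow> reflection d v x = x"
  by (simp add: reflection_def)

lemma reflection_involutive:
  assumes "bform d v v \<noteq> 0"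
  shows "reflection d v (reflection d v x) = x"
proof -
  have "bform d v (reflection d v x) = - bform d v x"
    unfolding reflection_def using assms by (simp only: bform_linear) simp
  then show ?thesis
    by (intro ext) (subst reflection_def, simp add: reflection_def)
qed

definition turn :: "nat \<Rightarrow> (nat \<Rightarrow> 'a::field) \<Rightarrow> (nat \<Rightarrow> 'a) \<Rightarrow> (nat \<Rightarrow> 'a) \<Rightarrow> (nat \<Rightarrow> 'a)" where
  "turn d e f x = reflection d f (reflection d (\<lambda>i. e i + f i) x)"

lemma bform_add_units:
  fixes e f :: "nat \<Rightarrow> 'a::comm_ring_1"
  assumes "bform d e e = 1" and "bform d f f = 1"
  shows "bform d (\<lambda>i. e i + f i) (\<lambda>i. e i + f i) = 2 * (1 + bform d e f)"
  using assms by (simp add: bform_linear bform_commute[of d f e])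

lemma bform_add_units_nonzero:
  fixes e f :: "nat \<Rightarrow> 'a::field_char_0"
  assumes "bform d e e = 1" and "bform d f f = 1" and "1 + bform d e f \<noteq> 0"
  shows "bform d (\<lambda>i. e i + f i) (\<lambda>i. e i + f i) \<noteq> 0"
  using assms by (metis bform_add_units mult_eq_0_iff zero_neq_numeral)

lemma turn_apply_self:
  fixes e f :: "nat \<Rightarrow> 'a::field_char_0"
  assumes ee: "bform d e e = 1" and ff: "bform d f f = 1" and ef: "1 + bform d e f \<noteq> 0"
  shows "turn d e f e = f"
proof -
  have "bform d (\<lambda>i. e i + f i) e = 1 + bform d e f"
    using ee by (simp add: bform_linear bform_commute[of d f e])
  moreover have "2 * (1 + bform d e f) \<noteq> 0"
    using ef by (metis mult_eq_0_iff zero_neq_numeral)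
  ultimately have "reflection d (\<lambda>i. e i + f i) e = (\<lambda>i. - f i)"
    unfolding reflection_def bform_add_units[OF ee ff] by simp
  then have "turn d e f e = reflection d f (\<lambda>i. - f i)"
    by (simp add: turn_def)
  also have "\<dots> = f"
    using ff by (intro ext) (simp add: reflection_def bform_minus_right)
  finally show ?thesis .
qed

lemma turn_orthogonal: "bform d e u = 0 \<Longrightarrow> bform d f u = 0 \<Longrightarrow> turn d e f u = u"
  by (simp add: turn_def reflection_orthogonal bform_linear)

lemma turn_isometry:
  fixes e f :: "nat \<Rightarrow> 'a::field_char_0"
  assumes "bform d e e = 1" and "bform d f f = 1" and "1 + bform d e f \<noteq> 0"
  shows "bform d (turn d e f x) (turn d e f y) = bform d x y"
  using assms by (simp add: turn_def reflection_isometry bform_add_units_nonzero)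

lemma turn_add: "turn d e f (\<lambda>i. x i + y i) = (\<lambda>i. turn d e f x i + turn d e f y i)"
  by (simp add: turn_def reflection_add)

lemma turn_scale: "turn d e f (\<lambda>i. c * x i) = (\<lambda>i. c * turn d e f x i)"
  by (simp add: turn_def reflection_scale)

lemma turn_Evec: "e \<in> Evec d \<Longrightarrow> f \<in> Evec d \<Longrightarrow> x \<in> Evec d \<Longrightarrow> turn d e f x \<in> Evec d"
  unfolding turn_def by (intro reflection_Evec) (auto simp: Evec_def)

lemma turn_same:
  fixes e :: "nat \<Rightarrow> 'a::field_char_0"
  assumes "bform d e e \<noteq> 0"
  shows "turn d e e x = x"
proof -
  have "(\<lambda>i. e i + e i) = (\<lambda>i. 2 * e i)"
    by (rule ext) (rule mult_2[symmetric])
  then have "reflection d (\<lambda>i. e i + e i) x = reflection d e x"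
    unfolding reflection_def using assms by (intro ext) (simp add: bform_scale_left bform_scale_right)
  then show ?thesis
    using assms by (simp add: turn_def reflection_involutive)
qed

definition unit_vec :: "nat \<Rightarrow> (nat \<Rightarrow> real) \<Rightarrow> nat \<Rightarrow> real" where
  "unit_vec d x = (\<lambda>i. x i / sqrt (bform d x x))"

lemma bform_unit_vec:
  "bform d (unit_vec d x) (unit_vec d y) = bform d x y / (sqrt (bform d x x) * sqrt (bform d y y))"
  unfolding unit_vec_def divide_inverse bform_scale'_left bform_scale'_right
  by (simp add: field_simps)

lemma bform_unit_vec_self: "bform d x x > 0 \<Longrightarrow> bform d (unit_vec d x) (unit_vec d x) = 1"
  by (simp add: bform_unit_vec)

lemma unit_vec_scale: "bform d x x > 0 \<Longrightarrow> x = (\<lambda>i. sqrt (bform d x x) * unit_vec d x i)"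
  by (auto simp: unit_vec_def)

lemma unit_vec_Evec: "x \<in> Evec d \<Longrightarrow> unit_vec d x \<in> Evec d"
  by (simp add: Evec_def unit_vec_def)

text \<open>The second turn fixes \<open>p'\<close>, which is orthogonal to both of its vectors.\<close>
definition frame_map :: "nat \<Rightarrow> (nat \<Rightarrow> real) \<Rightarrow> (nat \<Rightarrow> real) \<Rightarrow> (nat \<Rightarrow> real) \<Rightarrow> (nat \<Rightarrow> real)
    \<Rightarrow> (nat \<Rightarrow> real) \<Rightarrow> nat \<Rightarrow> real" where
  "frame_map d p q p' q' x =
     (let e = unit_vec d p; f = unit_vec d p'; g = turn d e f (unit_vec d q); h = unit_vec d q'
      in turn d g h (turn d e f x))"

definition frame_admissible :: "nat \<Rightarrow> (nat \<Rightarrow> real) \<Rightarrow> (nat \<Rightarrow> real) \<Rightarrow> (nat \<Rightarrow> real)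
    \<Rightarrow> (nat \<Rightarrow> real) \<Rightarrow> bool" where
  "frame_admissible d p q p' q' \<longleftrightarrow>
     (let e = unit_vec d p; f = unit_vec d p'; g = turn d e f (unit_vec d q); h = unit_vec d q'
      in 1 + bform d e f \<noteq> 0 \<and> 1 + bform d g h \<noteq> 0)"

lemma frame_map_add:
  "frame_map d p q p' q' (\<lambda>i. x i + y i) = (\<lambda>i. frame_map d p q p' q' x i + frame_map d p q p' q' y i)"
  by (simp add: frame_map_def Let_def turn_add)

lemma frame_map_scale:
  "frame_map d p q p' q' (\<lambda>i. c * x i) = (\<lambda>i. c * frame_map d p q p' q' x i)"
  by (simp add: frame_map_def Let_def turn_scale)

lemma frame_map_Evec:
  "p \<in> Evec d \<Longrightarrow> q \<in> Evec d \<Longrightarrow> p' \<in> Evec d \<Longrightarrow> q' \<in> Evec d \<Longrightarrow> x \<in> Evec d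
     \<Longrightarrow> frame_map d p q p' q' x \<in> Evec d"
  by (simp add: frame_map_def Let_def turn_Evec unit_vec_Evec)

lemma frame_map_carries_frame:
  assumes pp: "bform d p' p' = bform d p p" and qq: "bform d q' q' = bform d q q"
    and P: "bform d p p > 0" and Q: "bform d q q > 0"
    and pq: "bform d p q = 0" and pq': "bform d p' q' = 0"
    and adm: "frame_admissible d p q p' q'"
  shows "frame_map d p q p' q' p = p'" and "frame_map d p q p' q' q = q'"
    and "bform d (frame_map d p q p' q' x) (frame_map d p q p' q' y) = bform d x y"
proof -
  define e where "e = unit_vec d p"
  define f where "f = unit_vec d p'"
  define g where "g = turn d e f (unit_vec d q)"
  define h where "h = unit_vec d q'"
  have K: "frame_map d p q p' q' x = turn d g h (turn d e f x)" for x
    by (simp add: frame_map_def Let_def e_def f_def g_def h_def)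
  have ef: "1 + bform d e f \<noteq> 0" and gh: "1 + bform d g h \<noteq> 0"
    using adm by (simp_all add: frame_admissible_def Let_def e_def f_def g_def h_def)
  have ee: "bform d e e = 1" and ff: "bform d f f = 1" and hh: "bform d h h = 1"
    using P Q pp qq by (simp_all add: e_def f_def h_def bform_unit_vec_self)
  have gg: "bform d g g = 1"
    using Q by (simp add: g_def turn_isometry[OF ee ff ef] bform_unit_vec_self)
  have gf: "bform d g f = 0"
  proof -
    have "bform d g f = bform d (turn d e f (unit_vec d q)) (turn d e f e)"
      by (simp add: g_def turn_apply_self[OF ee ff ef])
    also have "\<dots> = 0"
      unfolding turn_isometry[OF ee ff ef] by (simp add: e_def bform_unit_vec bform_commute[of d q p] pq)
    finally show ?thesis .
  qed
  have hf: "bform d h f = 0"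
    by (simp add: h_def f_def bform_unit_vec bform_commute[of d q' p'] pq')
  have p_eq: "p = (\<lambda>i. sqrt (bform d p p) * e i)" and p'_eq: "p' = (\<lambda>i. sqrt (bform d p p) * f i)"
    using P pp unit_vec_scale[of d p] unit_vec_scale[of d p'] by (simp_all add: e_def f_def)
  have q_eq: "q = (\<lambda>i. sqrt (bform d q q) * unit_vec d q i)"
    and q'_eq: "q' = (\<lambda>i. sqrt (bform d q q) * h i)"
    using Q qq unit_vec_scale[of d q] unit_vec_scale[of d q'] by (simp_all add: h_def)
  have turn_f: "turn d g h f = f"
    using gf hf by (intro turn_orthogonal) (simp_all add: bform_commute[of d f])
  show "frame_map d p q p' q' p = p'"
    unfolding K by (subst p_eq, subst p'_eq) (simp add: turn_scale turn_apply_self[OF ee ff ef] turn_f)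
  show "frame_map d p q p' q' q = q'"
    unfolding K by (subst q_eq, subst q'_eq) (simp add: turn_scale g_def[symmetric] turn_apply_self[OF gg hh gh])
  show "bform d (frame_map d p q p' q' x) (frame_map d p q p' q' y) = bform d x y"
    unfolding K turn_isometry[OF gg hh gh] turn_isometry[OF ee ff ef] ..
qed

definition complexify :: "((nat \<Rightarrow> real) \<Rightarrow> (nat \<Rightarrow> real)) \<Rightarrow> (nat \<Rightarrow> complex) \<Rightarrow> nat \<Rightarrow> complex" where
  "complexify K z = (\<lambda>i. cvec (K (Re_vec z)) i + \<i> * cvec (K (Im_vec z)) i)"

lemma complexify_plane_rotation:
  assumes add: "\<And>x y. K (\<lambda>i. x i + y i) = (\<lambda>i. K x i + K y i)"
    and scale: "\<And>r x. K (\<lambda>i. r * x i) = (\<lambda>i. r * K x i)"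
    and isometry: "\<And>x y. bform d (K x) (K y) = bform d x y"
  shows "complexify K (plane_rotation d \<tau> (cvec a) (cvec b) (cvec c))
    = plane_rotation d \<tau> (cvec (K a)) (cvec (K b)) (cvec (K c))"
proof -
  define u where "u = (\<lambda>i. a i * bform d b c - b i * bform d a c)"
  define v where "v = (\<lambda>i. a i * bform d a c + b i * bform d b c)"
  have combination: "K (\<lambda>i. r * x i + s * y i) = (\<lambda>i. r * K x i + s * K y i)" for r s x y
    by (simp add: add scale)
  have Ku: "K u = (\<lambda>i. K a i * bform d (K b) (K c) - K b i * bform d (K a) (K c))"
    using combination[of "bform d b c" a "- bform d a c" b] by (simp add: u_def isometry algebra_simps)
  have Kv: "K v = (\<lambda>i. K a i * bform d (K a) (K c) + K b i * bform d (K b) (K c))"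
    using combination[of "bform d a c" a "bform d b c" b] by (simp add: v_def isometry algebra_simps)
  have Re: "Re_vec (plane_rotation d \<tau> (cvec a) (cvec b) (cvec c))
      = (\<lambda>i. c i + Re (sin \<tau>) * u i + Re (cos \<tau> - 1) * v i)"
    and Im: "Im_vec (plane_rotation d \<tau> (cvec a) (cvec b) (cvec c))
      = (\<lambda>i. Im (sin \<tau>) * u i + Im (cos \<tau> - 1) * v i)"
    unfolding plane_rotation_cvec Re_vec_def Im_vec_def by (simp_all add: cvec_def u_def v_def)
  have "complexify K (plane_rotation d \<tau> (cvec a) (cvec b) (cvec c))
      = (\<lambda>i. cvec (K c) i + sin \<tau> * cvec (K u) i + (cos \<tau> - 1) * cvec (K v) i)"
    unfolding complexify_def Re Im
    by (intro ext) (simp add: add scale combination cvec_def complex_eq_iff)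
  also have "\<dots> = plane_rotation d \<tau> (cvec (K a)) (cvec (K b)) (cvec (K c))"
    unfolding plane_rotation_cvec Ku Kv by (simp add: cvec_def)
  finally show ?thesis .
qed

section \<open>Continuity\<close>

lemma tendsto_fun_iff:
  fixes f :: "'a \<Rightarrow> 'b \<Rightarrow> 'c::topological_space"
  shows "(f \<longlongrightarrow> l) F \<longleftrightarrow> (\<forall>i. ((\<lambda>x. f x i) \<longlongrightarrow> l i) F)"
  using limitin_componentwise[of "\<lambda>_. euclidean" UNIV f l F]
  by (simp add: euclidean_product_topology)

lemma tendsto_bform [tendsto_intros]:
  fixes u v :: "'m \<Rightarrow> nat \<Rightarrow> 'a::real_normed_field"
  assumes "(u \<longlongrightarrow> u0) F" and "(v \<longlongrightarrow> v0) F"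
  shows "((\<lambda>m. bform d (u m) (v m)) \<longlongrightarrow> bform d u0 v0) F"
  using assms unfolding bform_def tendsto_fun_iff by (intro tendsto_intros) auto

lemma tendsto_cvec [tendsto_intros]: "(u \<longlongrightarrow> u0) F \<Longrightarrow> ((\<lambda>m. cvec (u m)) \<longlongrightarrow> cvec u0) F"
  unfolding cvec_def tendsto_fun_iff by (auto intro: tendsto_intros)

lemma tendsto_Re_vec [tendsto_intros]: "(z \<longlongrightarrow> z0) F \<Longrightarrow> ((\<lambda>m. Re_vec (z m)) \<longlongrightarrow> Re_vec z0) F"
  unfolding Re_vec_def tendsto_fun_iff by (auto intro: tendsto_intros)

lemma tendsto_Im_vec [tendsto_intros]: "(z \<longlongrightarrow> z0) F \<Longrightarrow> ((\<lambda>m. Im_vec (z m)) \<longlongrightarrow> Im_vec z0) F"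
  unfolding Im_vec_def tendsto_fun_iff by (auto intro: tendsto_intros)

lemma tendsto_plane_rotation [tendsto_intros]:
  assumes "(\<tau> \<longlongrightarrow> \<tau>0) F" and "(A \<longlongrightarrow> A0) F" and "(B \<longlongrightarrow> B0) F" and "(x \<longlongrightarrow> x0) F"
  shows "((\<lambda>m. plane_rotation d (\<tau> m) (A m) (B m) (x m)) \<longlongrightarrow> plane_rotation d \<tau>0 A0 B0 x0) F"
proof -
  have "((\<lambda>m. sin (\<tau> m)) \<longlongrightarrow> sin \<tau>0) F" and "((\<lambda>m. cos (\<tau> m)) \<longlongrightarrow> cos \<tau>0) F"
    using isCont_tendsto_compose[OF isCont_sin assms(1)] isCont_tendsto_compose[OF isCont_cos assms(1)]
    by simp_all
  then show ?thesis
    using assms unfolding tendsto_fun_iff[of _ "plane_rotation d \<tau>0 A0 B0 x0"] unfolding plane_rotation_def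
    by (intro allI tendsto_intros tendsto_bform) (auto simp: tendsto_fun_iff)
qed

lemma tendsto_reflection:
  fixes v x :: "'m \<Rightarrow> nat \<Rightarrow> 'a::real_normed_field"
  assumes "(v \<longlongrightarrow> v0) F" and "(x \<longlongrightarrow> x0) F" and "bform d v0 v0 \<noteq> 0"
  shows "((\<lambda>m. reflection d (v m) (x m)) \<longlongrightarrow> reflection d v0 x0) F"
  using assms unfolding tendsto_fun_iff[of _ "reflection d v0 x0"] unfolding reflection_def
  by (intro allI tendsto_intros tendsto_bform) (auto simp: tendsto_fun_iff)

lemma tendsto_turn:
  fixes e f x :: "'m \<Rightarrow> nat \<Rightarrow> 'a::real_normed_field"
  assumes "(e \<longlongrightarrow> e0) F" and "(f \<longlongrightarrow> f0) F" and "(x \<longlongrightarrow> x0) F"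
    and "bform d f0 f0 \<noteq> 0" and "bform d (\<lambda>i. e0 i + f0 i) (\<lambda>i. e0 i + f0 i) \<noteq> 0"
  shows "((\<lambda>m. turn d (e m) (f m) (x m)) \<longlongrightarrow> turn d e0 f0 x0) F"
proof -
  have "((\<lambda>m i. e m i + f m i) \<longlongrightarrow> (\<lambda>i. e0 i + f0 i)) F"
    using assms(1,2) by (auto simp: tendsto_fun_iff intro: tendsto_intros)
  then show ?thesis
    unfolding turn_def using assms by (intro tendsto_reflection) auto
qed

lemma tendsto_unit_vec:
  assumes "(x \<longlongrightarrow> x0) F" and "bform d x0 x0 > 0"
  shows "((\<lambda>m. unit_vec d (x m)) \<longlongrightarrow> unit_vec d x0) F"
  using assms unfolding tendsto_fun_iff[of _ "unit_vec d x0"] unfolding unit_vec_def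
  by (intro allI tendsto_intros tendsto_bform) (auto simp: tendsto_fun_iff)

lemma tendsto_frame_map:
  assumes p: "(p \<longlongrightarrow> p0) F" and p': "(p' \<longlongrightarrow> p0) F" and q: "(q \<longlongrightarrow> q0) F" and q': "(q' \<longlongrightarrow> q0) F"
    and P: "bform d p0 p0 > 0" and Q: "bform d q0 q0 > 0"
  shows "((\<lambda>m. frame_map d (p m) (q m) (p' m) (q' m) x) \<longlongrightarrow> x) F"
    and "eventually (\<lambda>m. frame_admissible d (p m) (q m) (p' m) (q' m)) F"
proof -
  define e0 where "e0 = unit_vec d p0"
  define h0 where "h0 = unit_vec d q0"
  define e where "e = (\<lambda>m. unit_vec d (p m))"
  define f where "f = (\<lambda>m. unit_vec d (p' m))"
  define g where "g = (\<lambda>m. turn d (e m) (f m) (unit_vec d (q m)))"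
  define h where "h = (\<lambda>m. unit_vec d (q' m))"
  have e0e0: "bform d e0 e0 = 1" and h0h0: "bform d h0 h0 = 1"
    using P Q by (simp_all add: e0_def h0_def bform_unit_vec_self)
  have e0_nz: "bform d (\<lambda>i. e0 i + e0 i) (\<lambda>i. e0 i + e0 i) \<noteq> 0"
    and h0_nz: "bform d (\<lambda>i. h0 i + h0 i) (\<lambda>i. h0 i + h0 i) \<noteq> 0"
    using bform_add_units_nonzero[of d e0 e0] bform_add_units_nonzero[of d h0 h0] e0e0 h0h0
    by simp_all
  have e: "(e \<longlongrightarrow> e0) F" and f: "(f \<longlongrightarrow> e0) F" and h: "(h \<longlongrightarrow> h0) F"
    using p p' q' P Q by (simp_all add: e_def f_def h_def e0_def h0_def tendsto_unit_vec)
  have "(g \<longlongrightarrow> turn d e0 e0 h0) F"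
    unfolding g_def h0_def using e f q Q e0e0 e0_nz by (intro tendsto_turn tendsto_unit_vec) auto
  then have g: "(g \<longlongrightarrow> h0) F"
    using e0e0 by (simp add: turn_same)
  have "((\<lambda>m. turn d (g m) (h m) (turn d (e m) (f m) x)) \<longlongrightarrow> turn d h0 h0 (turn d e0 e0 x)) F"
    using e f g h e0e0 h0h0 e0_nz h0_nz by (intro tendsto_turn) auto
  then show "((\<lambda>m. frame_map d (p m) (q m) (p' m) (q' m) x) \<longlongrightarrow> x) F"
    using e0e0 h0h0 by (simp add: turn_same frame_map_def Let_def e_def f_def g_def h_def)
  have "((\<lambda>m. 1 + bform d (e m) (f m)) \<longlongrightarrow> 1 + bform d e0 e0) F"
    and "((\<lambda>m. 1 + bform d (g m) (h m)) \<longlongrightarrow> 1 + bform d h0 h0) F"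
    using e f g h by (auto intro: tendsto_intros)
  then have "eventually (\<lambda>m. 1 + bform d (e m) (f m) \<noteq> 0) F"
    and "eventually (\<lambda>m. 1 + bform d (g m) (h m) \<noteq> 0) F"
    using e0e0 h0h0 by (auto elim!: tendsto_imp_eventually_ne)
  then show "eventually (\<lambda>m. frame_admissible d (p m) (q m) (p' m) (q' m)) F"
    by eventually_elim (simp add: frame_admissible_def Let_def e_def f_def g_def h_def)
qed

lemma openin_top_of_set_eventually:
  assumes "T \<subseteq> S" and "\<And>x. x \<in> T \<Longrightarrow> eventually (\<lambda>y. y \<in> S \<longrightarrow> y \<in> T) (nhds x)"
  shows "openin (top_of_set S) T"
  unfolding openin_subopen[of _ T]
proof
  fix x assume "x \<in> T"
  then obtain U where "open U" "x \<in> U" "\<forall>y\<in>U. y \<in> S \<longrightarrow> y \<in> T"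
    using assms(2) unfolding eventually_nhds by blast
  then show "\<exists>V. openin (top_of_set S) V \<and> x \<in> V \<and> V \<subseteq> T"
    using \<open>x \<in> T\<close> assms(1) by (intro exI[of _ "S \<inter> U"]) auto
qed

section \<open>Lifting points near \<open>exp (\<tau> L) c\<close>\<close>

text \<open>If \<open>c\<close> were orthogonal to \<open>a\<close> and \<open>b\<close>, the vector \<open>p a + q b + r c\<close> built from the
  \<open>(0, d)\<close>-minors would vanish in the coordinates \<open>0\<close> and \<open>d\<close>, hence have nonpositive square,
  while its square is \<open>p\<^sup>2 + q\<^sup>2 + r\<^sup>2 > 0\<close>.\<close>
lemma plane_projection_pos:
  fixes a b c :: "nat \<Rightarrow> real"
  assumes aa: "bform d a a = 1" and bb: "bform d b b = 1" and ab: "bform d a b = 0"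
    and cc: "bform d c c = 1" and minor: "a 0 * b d - a d * b 0 \<noteq> 0"
  shows "(bform d a c)\<^sup>2 + (bform d b c)\<^sup>2 > 0"
proof (rule ccontr)
  assume "\<not> ?thesis"
  then have "(bform d a c)\<^sup>2 + (bform d b c)\<^sup>2 = 0"
    by (smt (verit) zero_le_power2)
  then have ac: "bform d a c = 0" and bc: "bform d b c = 0"
    by (simp_all add: sum_power2_eq_zero_iff)
  define p where "p = b 0 * c d - b d * c 0"
  define q where "q = c 0 * a d - c d * a 0"
  define r where "r = a 0 * b d - a d * b 0"
  define v where "v = (\<lambda>i. p * a i + q * b i + r * c i)"
  have "bform d v v = p\<^sup>2 + q\<^sup>2 + r\<^sup>2"
    unfolding v_def
    by (simp add: bform_linear aa bb cc ab ac bc bform_commute[of d b a] bform_commute[of d c a]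
        bform_commute[of d c b] power2_eq_square)
  moreover have "v 0 = 0" and "v d = 0"
    unfolding v_def p_def q_def r_def by (simp_all add: algebra_simps)
  then have "bform d v v = - (\<Sum>j\<in>{1..d-1}. v j * v j)"
    by (simp add: bform_def)
  moreover have "(\<Sum>j\<in>{1..d-1}. v j * v j) \<ge> 0"
    by (intro sum_nonneg) simp
  moreover have "r\<^sup>2 > 0"
    using minor r_def by simp
  ultimately show False
    by (smt (verit) zero_le_power2)
qed

lemma bform_Im_vec_plane_rotation:
  fixes a b c :: "nat \<Rightarrow> real"
  assumes aa: "bform d a a = 1" and bb: "bform d b b = 1" and ab: "bform d a b = 0"
  shows "bform d (Im_vec (plane_rotation d (Complex s t) (cvec a) (cvec b) (cvec c)))
      (Im_vec (plane_rotation d (Complex s t) (cvec a) (cvec b) (cvec c)))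
    = (sinh t)\<^sup>2 * ((bform d a c)\<^sup>2 + (bform d b c)\<^sup>2)"
proof -
  define \<alpha> where "\<alpha> = bform d a c"
  define \<beta> where "\<beta> = bform d b c"
  define u where "u = (\<lambda>i. cos s * (\<beta> * a i - \<alpha> * b i) - sin s * (\<alpha> * a i + \<beta> * b i))"
  have "Im_vec (plane_rotation d (Complex s t) (cvec a) (cvec b) (cvec c)) = (\<lambda>i. sinh t * u i)"
    unfolding plane_rotation_cvec Im_vec_def u_def \<alpha>_def \<beta>_def
    by (rule ext, simp add: cvec_def Im_sin Im_cos sinh_def, simp add: field_simps)
  moreover have "bform d u u = \<alpha>\<^sup>2 + \<beta>\<^sup>2"
    unfolding u_def
    by (simp add: bform_linear aa bb ab bform_commute[of d b a]) (use sin_cos_squared_add[of s] in algebra)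
  ultimately show ?thesis
    by (simp add: bform_linear power2_eq_square \<alpha>_def \<beta>_def)
qed

lemma frame_map_transports_plane_rotation:
  fixes d :: nat and \<zeta> w :: "nat \<Rightarrow> complex"
  defines "K \<equiv> frame_map d (Re_vec \<zeta>) (Im_vec \<zeta>) (Re_vec w) (Im_vec w)"
  assumes \<zeta>_def: "\<zeta> = plane_rotation d \<tau> (cvec a) (cvec b) (cvec c)"
    and ab: "oriented_orthonormal d a b" and c: "c \<in> Xd d" and w: "w \<in> Xdc d"
    and Im_eq: "bform d (Im_vec w) (Im_vec w) = bform d (Im_vec \<zeta>) (Im_vec \<zeta>)"
    and Im_pos: "bform d (Im_vec \<zeta>) (Im_vec \<zeta>) > 0"
    and adm: "frame_admissible d (Re_vec \<zeta>) (Im_vec \<zeta>) (Re_vec w) (Im_vec w)"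
    and minor: "K a 0 * K b d - K a d * K b 0 > 0"
  shows "oriented_orthonormal d (K a) (K b)" and "K c \<in> Xd d"
    and "w = plane_rotation d \<tau> (cvec (K a)) (cvec (K b)) (cvec (K c))"
proof -
  have \<zeta>: "\<zeta> \<in> Xdc d"
    unfolding \<zeta>_def using ab c by (rule plane_rotation_cvec_Xdc)
  note \<zeta>_parts = Xdc_Re_Im_vec[OF \<zeta>] and w_parts = Xdc_Re_Im_vec[OF w]
  have Re_pos: "bform d (Re_vec \<zeta>) (Re_vec \<zeta>) > 0"
    using \<zeta>_parts(1) Im_pos by simp
  note frame = frame_map_carries_frame[of d "Re_vec w" "Re_vec \<zeta>" "Im_vec w" "Im_vec \<zeta>", folded K_def,
      OF _ Im_eq Re_pos Im_pos \<zeta>_parts(2) w_parts(2) adm]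
  have isometry: "bform d (K x) (K y) = bform d x y" for x y
    using frame(3) \<zeta>_parts(1) w_parts(1) Im_eq by simp
  have Evec: "K x \<in> Evec d" if "x \<in> Evec d" for x
    unfolding K_def using \<zeta>_parts w_parts that by (intro frame_map_Evec)
  show "oriented_orthonormal d (K a) (K b)"
    using ab minor by (simp add: oriented_orthonormal_def isometry Evec)
  show "K c \<in> Xd d"
    using c by (simp add: Xd_def isometry Evec)
  have "w = complexify K \<zeta>"
    using frame(1,2) \<zeta>_parts(1) w_parts(1) Im_eq unfolding complexify_def
    by (simp add: Re_Im_vec_decomp[of w, symmetric])
  also have "\<dots> = plane_rotation d \<tau> (cvec (K a)) (cvec (K b)) (cvec (K c))"
    unfolding \<zeta>_def
    by (rule complexify_plane_rotation[OF _ _ isometry]) (simp_all add: K_def frame_map_add frame_map_scale)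
  finally show "w = plane_rotation d \<tau> (cvec (K a)) (cvec (K b)) (cvec (K c))" .
qed

lemma bform_Im_vec_plane_rotation_pos:
  assumes "oriented_orthonormal d a b" and "c \<in> Xd d" and "t \<noteq> 0"
  shows "bform d (Im_vec (plane_rotation d (Complex s t) (cvec a) (cvec b) (cvec c)))
      (Im_vec (plane_rotation d (Complex s t) (cvec a) (cvec b) (cvec c))) > 0"
proof -
  have "(bform d a c)\<^sup>2 + (bform d b c)\<^sup>2 > 0"
    using assms by (intro plane_projection_pos) (auto simp: oriented_orthonormal_def Xd_def)
  then show ?thesis
    using assms by (simp add: bform_Im_vec_plane_rotation oriented_orthonormal_def)
qed

lemma plane_rotation_height_match:
  fixes w :: "'m \<Rightarrow> nat \<Rightarrow> complex"
  assumes ab: "oriented_orthonormal d a b" and c: "c \<in> Xd d" and t: "t > 0"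
    and w: "(w \<longlongrightarrow> plane_rotation d (Complex s t) (cvec a) (cvec b) (cvec c)) F"
  obtains t' where "(t' \<longlongrightarrow> t) F"
    and "eventually (\<lambda>m. t' m > 0 \<and> bform d (Im_vec (w m)) (Im_vec (w m)) =
      bform d (Im_vec (plane_rotation d (Complex s (t' m)) (cvec a) (cvec b) (cvec c)))
        (Im_vec (plane_rotation d (Complex s (t' m)) (cvec a) (cvec b) (cvec c)))) F"
proof -
  define \<rho> where "\<rho> = (bform d a c)\<^sup>2 + (bform d b c)\<^sup>2"
  have Im_norm: "bform d (Im_vec (plane_rotation d (Complex s t) (cvec a) (cvec b) (cvec c)))
      (Im_vec (plane_rotation d (Complex s t) (cvec a) (cvec b) (cvec c))) = (sinh t)\<^sup>2 * \<rho>" for t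
    unfolding \<rho>_def using ab by (intro bform_Im_vec_plane_rotation) (auto simp: oriented_orthonormal_def)
  have Y0: "(sinh t)\<^sup>2 * \<rho> > 0"
    using bform_Im_vec_plane_rotation_pos[OF ab c, of t s] t by (simp add: Im_norm)
  then have \<rho>: "\<rho> > 0"
    by (simp add: zero_less_mult_iff)
  define Y where "Y = (\<lambda>m. bform d (Im_vec (w m)) (Im_vec (w m)))"
  have Y_lim: "(Y \<longlongrightarrow> (sinh t)\<^sup>2 * \<rho>) F"
    unfolding Y_def Im_norm[symmetric] using w by (intro tendsto_intros)
  define t' where "t' = (\<lambda>m. arsinh (sqrt (Y m / \<rho>)))"
  have "(t' \<longlongrightarrow> arsinh (sqrt ((sinh t)\<^sup>2 * \<rho> / \<rho>))) F"
    unfolding t'_def using Y_lim \<rho> by (intro isCont_tendsto_compose[OF isCont_arsinh] tendsto_intros) auto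
  then have "(t' \<longlongrightarrow> t) F"
    using \<rho> t by (simp add: arsinh_sinh_real)
  moreover have "eventually (\<lambda>m. Y m > 0) F"
    using Y_lim Y0 by (rule order_tendstoD(1))
  then have "eventually (\<lambda>m. t' m > 0 \<and> Y m = (sinh (t' m))\<^sup>2 * \<rho>) F"
    by eventually_elim (use \<rho> in \<open>simp add: t'_def\<close>)
  ultimately show ?thesis
    using that by (simp add: Y_def Im_norm)
qed

lemma plane_rotation_local_section:
  fixes w :: "'m \<Rightarrow> nat \<Rightarrow> complex"
  assumes ab: "oriented_orthonormal d a b" and c: "c \<in> Xd d" and \<tau>: "Im \<tau> > 0"
    and w: "(w \<longlongrightarrow> plane_rotation d \<tau> (cvec a) (cvec b) (cvec c)) F"
  obtains \<tau>' a' b' where "(\<tau>' \<longlongrightarrow> \<tau>) F" and "(a' \<longlongrightarrow> a) F" and "(b' \<longlongrightarrow> b) F"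
    and "eventually (\<lambda>m. w m \<in> Xdc d \<longrightarrow> Im (\<tau>' m) > 0 \<and> oriented_orthonormal d (a' m) (b' m)
           \<and> (\<exists>c'\<in>Xd d. w m = plane_rotation d (\<tau>' m) (cvec (a' m)) (cvec (b' m)) (cvec c'))) F"
proof -
  obtain s t where \<tau>_eq: "\<tau> = Complex s t"
    by (cases \<tau>)
  define \<zeta> where "\<zeta> = (\<lambda>t. plane_rotation d (Complex s t) (cvec a) (cvec b) (cvec c))"
  have w_lim: "(w \<longlongrightarrow> \<zeta> t) F" and t: "t > 0"
    using w \<tau> by (simp_all add: \<tau>_eq \<zeta>_def)
  obtain t' where t'_lim: "(t' \<longlongrightarrow> t) F" and height: "eventually (\<lambda>m. t' m > 0
      \<and> bform d (Im_vec (w m)) (Im_vec (w m)) = bform d (Im_vec (\<zeta> (t' m))) (Im_vec (\<zeta> (t' m)))) F"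
    using plane_rotation_height_match[OF ab c t w_lim[unfolded \<zeta>_def]] unfolding \<zeta>_def by blast
  define K where "K = (\<lambda>m. frame_map d (Re_vec (\<zeta> (t' m))) (Im_vec (\<zeta> (t' m))) (Re_vec (w m)) (Im_vec (w m)))"
  have Im0: "bform d (Im_vec (\<zeta> t)) (Im_vec (\<zeta> t)) > 0"
    unfolding \<zeta>_def using ab c t by (intro bform_Im_vec_plane_rotation_pos) auto
  then have Re0: "bform d (Re_vec (\<zeta> t)) (Re_vec (\<zeta> t)) > 0"
    using Xdc_Re_Im_vec(1)[OF plane_rotation_cvec_Xdc[OF ab c]] by (simp add: \<zeta>_def)
  have "((\<lambda>m. \<zeta> (t' m)) \<longlongrightarrow> \<zeta> t) F"
    unfolding \<zeta>_def using t'_lim by (intro tendsto_intros)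
  then have lims: "((\<lambda>m. Re_vec (\<zeta> (t' m))) \<longlongrightarrow> Re_vec (\<zeta> t)) F" "((\<lambda>m. Re_vec (w m)) \<longlongrightarrow> Re_vec (\<zeta> t)) F"
    "((\<lambda>m. Im_vec (\<zeta> (t' m))) \<longlongrightarrow> Im_vec (\<zeta> t)) F" "((\<lambda>m. Im_vec (w m)) \<longlongrightarrow> Im_vec (\<zeta> t)) F"
    using w_lim by (auto intro: tendsto_intros)
  have K_lim: "((\<lambda>m. K m x) \<longlongrightarrow> x) F" for x
    unfolding K_def by (rule tendsto_frame_map(1)[OF lims Re0 Im0])
  have "eventually (\<lambda>m. K m a 0 * K m b d - K m a d * K m b 0 > 0) F"
    using K_lim[of a] K_lim[of b] ab unfolding tendsto_fun_iff oriented_orthonormal_def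
    by (intro order_tendstoD(1)[where y = "a 0 * b d - a d * b 0"] tendsto_intros) auto
  then have lift: "eventually (\<lambda>m. w m \<in> Xdc d \<longrightarrow> Im (Complex s (t' m)) > 0
      \<and> oriented_orthonormal d (K m a) (K m b)
      \<and> (\<exists>c'\<in>Xd d. w m = plane_rotation d (Complex s (t' m)) (cvec (K m a)) (cvec (K m b)) (cvec c'))) F"
    using height tendsto_frame_map(2)[OF lims Re0 Im0]
  proof eventually_elim
    case (elim m)
    have "w m \<in> Xdc d \<Longrightarrow> oriented_orthonormal d (K m a) (K m b) \<and> K m c \<in> Xd d
        \<and> w m = plane_rotation d (Complex s (t' m)) (cvec (K m a)) (cvec (K m b)) (cvec (K m c))"
      using frame_map_transports_plane_rotation[where \<zeta> = "\<zeta> (t' m)" and w = "w m"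
          and \<tau> = "Complex s (t' m)"] bform_Im_vec_plane_rotation_pos[OF ab c] ab c elim
      by (simp add: \<zeta>_def K_def)
    then show ?case
      using elim(2) by auto
  qed
  have "((\<lambda>m. Complex s (t' m)) \<longlongrightarrow> \<tau>) F"
    unfolding \<tau>_eq using t'_lim by (intro tendsto_intros)
  then show ?thesis
    by (rule that[OF _ K_lim K_lim lift])
qed

section \<open>Induction on the number of points\<close>

text \<open>Unlike \<open>Zplus\<close>, this set does not require \<open>z \<in> Xdc_pow d n\<close>, so it is stable under the
  shift \<open>j \<mapsto> j + 1\<close> of the induction.\<close>
definition Zchain :: "nat \<Rightarrow> nat \<Rightarrow> (nat \<Rightarrow> nat \<Rightarrow> complex) set" where
  "Zchain d n = {z. \<exists>\<tau> M c. \<forall>j\<in>{1..n}.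
     Im (\<tau> j) > 0 \<and> M j \<in> C1 d \<and> c j \<in> Xd d \<and> z j = expchain \<tau> M j (cvec (c j))}"

lemma Zplus_eq: "Zplus d n = Xdc_pow d n \<inter> Zchain d n"
  by (auto simp: Zplus_def Zchain_def)

lemma expchain_Suc_left:
  "expchain \<tau> M (Suc j) x
     = expop (\<lambda>y i. \<tau> 1 * M 1 y i) (expchain (\<lambda>k. \<tau> (Suc k)) (\<lambda>k. M (Suc k)) j x)"
  by (induction j arbitrary: x) simp_all

lemma expchain_cong:
  "(\<And>k. k \<in> {1..j} \<Longrightarrow> \<tau> k = \<tau>' k \<and> M k = M' k) \<Longrightarrow> expchain \<tau> M j x = expchain \<tau>' M' j x"
  by (induction j arbitrary: x) simp_all

lemma Zchain_SucD:
  assumes "z \<in> Zchain d (Suc n)"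
  obtains \<tau> a b c where "Im \<tau> > 0" and "oriented_orthonormal d a b" and "c \<in> Xd d"
    and "z 1 = plane_rotation d \<tau> (cvec a) (cvec b) (cvec c)"
    and "(\<lambda>j. plane_rotation d (-\<tau>) (cvec a) (cvec b) (z (Suc j))) \<in> Zchain d n"
proof -
  obtain \<tau> M c where H: "\<And>j. j \<in> {1..Suc n} \<Longrightarrow>
      Im (\<tau> j) > 0 \<and> M j \<in> C1 d \<and> c j \<in> Xd d \<and> z j = expchain \<tau> M j (cvec (c j))"
    using assms unfolding Zchain_def by blast
  then obtain a b where M1: "M 1 = ell d a b" and ab: "oriented_orthonormal d a b"
    by (force simp: C1_eq)
  have E1: "expop (\<lambda>y i. \<tau> 1 * M 1 y i) = plane_rotation d (\<tau> 1) (cvec a) (cvec b)"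
    unfolding M1 using ab by (intro expop_ell_eq_plane_rotation) (simp_all add: oriented_orthonormal_def)
  have "(\<lambda>j. plane_rotation d (-\<tau> 1) (cvec a) (cvec b) (z (Suc j))) \<in> Zchain d n"
    unfolding Zchain_def
  proof (intro CollectI exI ballI)
    fix j assume "j \<in> {1..n}"
    then have Hj: "Im (\<tau> (Suc j)) > 0" "M (Suc j) \<in> C1 d" "c (Suc j) \<in> Xd d"
        "z (Suc j) = expchain \<tau> M (Suc j) (cvec (c (Suc j)))"
      using H by simp_all
    have "z (Suc j) = plane_rotation d (\<tau> 1) (cvec a) (cvec b)
        (expchain (\<lambda>k. \<tau> (Suc k)) (\<lambda>k. M (Suc k)) j (cvec (c (Suc j))))"
      using Hj(4) by (simp only: expchain_Suc_left E1)
    then show "Im (\<tau> (Suc j)) > 0 \<and> M (Suc j) \<in> C1 d \<and> c (Suc j) \<in> Xd d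
        \<and> plane_rotation d (-\<tau> 1) (cvec a) (cvec b) (z (Suc j))
          = expchain (\<lambda>k. \<tau> (Suc k)) (\<lambda>k. M (Suc k)) j (cvec (c (Suc j)))"
      using Hj(1-3) ab by (simp add: plane_rotation_inverse oriented_orthonormal_cvec)
  qed
  then show ?thesis
    using H[of 1] E1 by (intro that[of "\<tau> 1" a b "c 1"] ab) auto
qed

lemma Zchain_SucI:
  assumes \<tau>: "Im \<tau> > 0" and ab: "oriented_orthonormal d a b" and c: "c \<in> Xd d"
    and z1: "z 1 = plane_rotation d \<tau> (cvec a) (cvec b) (cvec c)"
    and rest: "(\<lambda>j. plane_rotation d (-\<tau>) (cvec a) (cvec b) (z (Suc j))) \<in> Zchain d n"
  shows "z \<in> Zchain d (Suc n)"
proof -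
  obtain \<tau>' M' c' where H: "\<And>j. j \<in> {1..n} \<Longrightarrow> Im (\<tau>' j) > 0 \<and> M' j \<in> C1 d \<and> c' j \<in> Xd d
      \<and> plane_rotation d (-\<tau>) (cvec a) (cvec b) (z (Suc j)) = expchain \<tau>' M' j (cvec (c' j))"
    using rest unfolding Zchain_def by blast
  define \<tau>'' where "\<tau>'' = (\<lambda>j. if j = 1 then \<tau> else \<tau>' (j - 1))"
  define M'' where "M'' = (\<lambda>j. if j = 1 then ell d a b else M' (j - 1))"
  define c'' where "c'' = (\<lambda>j. if j = 1 then c else c' (j - 1))"
  have E1: "expop (\<lambda>y i. \<tau>'' 1 * M'' 1 y i) = plane_rotation d \<tau> (cvec a) (cvec b)"
    unfolding \<tau>''_def M''_def using ab
    by (simp add: expop_ell_eq_plane_rotation oriented_orthonormal_def)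
  have shift: "expchain (\<lambda>k. \<tau>'' (Suc k)) (\<lambda>k. M'' (Suc k)) k x = expchain \<tau>' M' k x" for k x
    by (rule expchain_cong) (simp add: \<tau>''_def M''_def)
  show ?thesis
    unfolding Zchain_def
  proof (intro CollectI exI[of _ \<tau>''] exI[of _ M''] exI[of _ c''] ballI)
    fix j assume j: "j \<in> {1..Suc n}"
    show "Im (\<tau>'' j) > 0 \<and> M'' j \<in> C1 d \<and> c'' j \<in> Xd d \<and> z j = expchain \<tau>'' M'' j (cvec (c'' j))"
    proof (cases "j = 1")
      case True
      then show ?thesis
        using \<tau> ab c z1 E1 by (auto simp: \<tau>''_def M''_def c''_def C1_eq)
    next
      case False
      then obtain k where k: "j = Suc k" "k \<in> {1..n}"
        using j by (cases j) auto
      have "z (Suc k) = plane_rotation d \<tau> (cvec a) (cvec b) (expchain \<tau>' M' k (cvec (c' k)))"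
        using H[OF k(2)] ab plane_rotation_inverse[of d "cvec a" "cvec b" "-\<tau>" "z (Suc k)"]
        by (simp add: oriented_orthonormal_cvec)
      also have "\<dots> = expchain \<tau>'' M'' (Suc k) (cvec (c' k))"
        by (simp only: expchain_Suc_left E1 shift)
      finally show ?thesis
        using H[OF k(2)] k by (simp add: \<tau>''_def M''_def c''_def)
    qed
  qed
qed

lemma Zchain_eventually:
  fixes W :: "'m \<Rightarrow> nat \<Rightarrow> nat \<Rightarrow> complex"
  assumes "z \<in> Zchain d n" and "(W \<longlongrightarrow> z) F"
  shows "eventually (\<lambda>m. (\<forall>j\<in>{1..n}. W m j \<in> Xdc d) \<longrightarrow> W m \<in> Zchain d n) F"
  using assms
proof (induction n arbitrary: z W)
  case 0
  then show ?case
    by (simp add: Zchain_def)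
next
  case (Suc n)
  obtain \<tau> a b c where \<tau>: "Im \<tau> > 0" and ab: "oriented_orthonormal d a b" and c: "c \<in> Xd d"
    and z1: "z 1 = plane_rotation d \<tau> (cvec a) (cvec b) (cvec c)"
    and rest: "(\<lambda>j. plane_rotation d (-\<tau>) (cvec a) (cvec b) (z (Suc j))) \<in> Zchain d n"
    using Suc.prems(1) by (rule Zchain_SucD)
  have "((\<lambda>m. W m 1) \<longlongrightarrow> z 1) F"
    using Suc.prems(2) unfolding tendsto_fun_iff[of W] by blast
  then have "((\<lambda>m. W m 1) \<longlongrightarrow> plane_rotation d \<tau> (cvec a) (cvec b) (cvec c)) F"
    by (simp only: z1)
  then obtain \<tau>' a' b' where lim: "(\<tau>' \<longlongrightarrow> \<tau>) F" "(a' \<longlongrightarrow> a) F" "(b' \<longlongrightarrow> b) F"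
    and lift: "eventually (\<lambda>m. W m 1 \<in> Xdc d \<longrightarrow> Im (\<tau>' m) > 0 \<and> oriented_orthonormal d (a' m) (b' m)
      \<and> (\<exists>c'\<in>Xd d. W m 1 = plane_rotation d (\<tau>' m) (cvec (a' m)) (cvec (b' m)) (cvec c'))) F"
    using plane_rotation_local_section[OF ab c \<tau>] by blast
  define W' where "W' = (\<lambda>m j. plane_rotation d (-\<tau>' m) (cvec (a' m)) (cvec (b' m)) (W m (Suc j)))"
  have "((\<lambda>m. W m (Suc j)) \<longlongrightarrow> z (Suc j)) F" for j
    using Suc.prems(2) unfolding tendsto_fun_iff[of W] by blast
  then have "(W' \<longlongrightarrow> (\<lambda>j. plane_rotation d (-\<tau>) (cvec a) (cvec b) (z (Suc j)))) F"
    using lim unfolding tendsto_fun_iff[of W'] unfolding W'_def by (intro allI tendsto_intros)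
  with rest have IH: "eventually (\<lambda>m. (\<forall>j\<in>{1..n}. W' m j \<in> Xdc d) \<longrightarrow> W' m \<in> Zchain d n) F"
    by (rule Suc.IH)
  show ?case
    using lift IH
  proof eventually_elim
    case (elim m)
    show ?case
    proof
      assume W: "\<forall>j\<in>{1..Suc n}. W m j \<in> Xdc d"
      then obtain c' where \<tau>'_m: "Im (\<tau>' m) > 0" and ab_m: "oriented_orthonormal d (a' m) (b' m)"
        and c': "c' \<in> Xd d" and W1: "W m 1 = plane_rotation d (\<tau>' m) (cvec (a' m)) (cvec (b' m)) (cvec c')"
        using elim(1) by auto
      have "W' m j \<in> Xdc d" if "j \<in> {1..n}" for j
        unfolding W'_def using W that ab_m by (intro plane_rotation_Xdc oriented_orthonormal_cvec) auto
      then have "W' m \<in> Zchain d n"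
        using elim(2) by blast
      then show "W m \<in> Zchain d (Suc n)"
        unfolding W'_def by (rule Zchain_SucI[where z = "W m", OF \<tau>'_m ab_m c' W1])
    qed
  qed
qed

theorem lemma8:
  fixes d n :: nat
  assumes "d \<ge> 2" and "n \<ge> 1"
  shows "openin (top_of_set (Xdc_pow d n)) (Zplus d n)"
proof (rule openin_top_of_set_eventually)
  show "Zplus d n \<subseteq> Xdc_pow d n"
    by (simp add: Zplus_eq)
  fix z assume "z \<in> Zplus d n"
  then have "z \<in> Zchain d n"
    by (simp add: Zplus_eq)
  then have "eventually (\<lambda>w. (\<forall>j\<in>{1..n}. w j \<in> Xdc d) \<longrightarrow> w \<in> Zchain d n) (nhds z)"
    by (rule Zchain_eventually[OF _ filterlim_ident])
  then show "eventually (\<lambda>w. w \<in> Xdc_pow d n \<longrightarrow> w \<in> Zplus d n) (nhds z)"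
    by eventually_elim (simp add: Zplus_eq Xdc_pow_def)
qed

end
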